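(* Let $(N,m)$ be a marked P/T net and $\mathcal U[N,m]=(O,m')$ its unfolding. Under the identification of a token of colour $(h,i)$ in place $a$ of $[\![N]\!]$ with the place $a(h,i)$ of $O$, and of a firing of transition $\mathsf t$ of $[\![N]\!]$ under substitution $\sigma$ with the unfolding transition $\mathsf t(H)$ where $H$ is the set of consumed tokens ${}^\bullet\mathsf t_{[\![N]\!]}\sigma$: for every firing sequence $s$ and marking $m''$, $[\![(N,m)]\!]\xrightarrow{s}([\![N]\!],m'')$ if and only if $(O,m')\xrightarrow{s}(O,m'')$.
   Context: A P/T net $N=(S_N,T_N,{}^\bullet\_,\_^\bullet)$ has disjoint sets of places and transitions and nonempty preset/postset multisets ${}^\bullet\mathsf t,\mathsf t^\bullet$ over $S_N$; markings are multisets of places and firing is: if ${}^\bullet\mathsf t=m_1$, $\mathsf t^\bullet=m_2$ then $(N,m_1\oplus m_3)\xrightarrow{\mathsf t}(N,m_2\oplus m_3)$. Unfolding: with $\preceq$ the reflexive-transitive closure of $\{(a,\mathsf t)\mid a\in{}^\bullet\mathsf t\}\cup\{(\mathsf t,a)\mid a\in\mathsf t^\bullet\}$, $x\#y$ iff there are transitions $\mathsf t_1\preceq x$, $\mathsf t_2\preceq y$, $\mathsf t_1\ne\mathsf t_2$, ${}^\bullet\mathsf t_1\cap{}^\bullet\mathsf t_2\ne\emptyset$, $x\ co\ y$ iff $x\ne y$, $x\not\preceq y$, $y\not\preceq x$, not $x\#y$, and $CO(X)$ iff elements of $X$ are pairwise $co$ and finitely many transitions lie below $X$, the unfolding $\mathcal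 U[N,m]$ is the least net with: places $a(\emptyset,i)$ for $1\le i\le m(a)$; a transition $\mathsf t(H)$ with preset $H$ whenever $H=\{a_j(h_j,i_j)\mid j\in J\}$ is a set of its places with $CO(H)$ and ${}^\bullet\mathsf t=\bigoplus_j a_j$; and for each $x=\mathsf t(H)$ the places $a(\{x\},i)$, $1\le i\le\mathsf t^\bullet(a)$, forming its postset. Its initial marking $m'$ is $\{a(\emptyset,i)\mid 1\le i\le m(a)\}$. Coloured nets: fix infinite sets $\mathcal X$ of variables and $\mathcal C\supseteq\mathcal X$ of colours, where $\mathcal C$ is the least set containing $\mathcal X$ with $(h,n)\in\mathcal C$ for $h\in 2^{\mathcal C}$, $n\in\mathbb N$, and $x(h)\in\mathcal C$ for $x$ a place or transition name and $h\in 2^{\mathcal C}$. A C-P/T net has places, transitions, and pre/postsets that are multisets over $S\times\mathcal C$ (written $a(c)$), with variables of the postset contained in those of the preset; markings are variable-free multisets over $S\times\mathcal C$. Coloured firing: for $\mathsf t=m_1[\rangle m_2$ and a substitution $\sigma:\mathcal X\rightharpoonup\mathcal C$, $(N,m_1\sigma\oplus m_3)\xrightarrow{\mathsf t}(N,m_2\sigma\oplus m_3)$. The encoding $[\![N]\!]$ of a P/T net has the same places and transitions, with ${}^\bullet\mathsf t_{[\![N]\!]}=a_1(x_1)\oplus\dots\oplus a_n(x_n)$ for ${}^\bullet\mathsf t_N=a_1\oplus\dots\oplus a_n$ and pairwise distinct variables $x_i$, and $\mathsf t^\bullet_{[\![N]\!]}=\{a(\{\mathsf t(h)\},i)\mid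 a\in\mathrm{supp}(\mathsf t^\bullet_N),\ 1\le i\le\mathsf t^\bullet_N(a),\ h={}^\bullet\mathsf t_{[\![N]\!]}\}$ (token in place $a$ with colour $(\{\mathsf t(h)\},i)$). A marked net is encoded as $[\![(N,m)]\!]=([\![N]\!],[\![m]\!])$ with $[\![m]\!]=\{a(\emptyset,i)\mid a\in\mathrm{supp}(m),\ 1\le i\le m(a)\}$ (tokens of colour $(\emptyset,i)$ in place $a$). *)

theory Defs
  imports Main "HOL-Library.Multiset" "HOL-Library.FSet"
begin

text \<open>A P/T net with carrier sets of places and transitions (disjoint: they live in
different types) and preset / postset multisets.\<close>
record ('p, 'u) ptnet =
  net_places :: "'p set"
  net_trans  :: "'u set"
  net_pre    :: "'u \<Rightarrow> 'p multiset"
  net_post   :: "'u \<Rightarrow> 'p multiset"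

definition wf_ptnet :: "('p, 'u) ptnet \<Rightarrow> bool" where
  "wf_ptnet N \<longleftrightarrow> (\<forall>t \<in> net_trans N.
      net_pre N t \<noteq> {#} \<and> net_post N t \<noteq> {#} \<and>
      set_mset (net_pre N t) \<subseteq> net_places N \<and> set_mset (net_post N t) \<subseteq> net_places N)"

definition wf_marking :: "('p, 'u) ptnet \<Rightarrow> 'p multiset \<Rightarrow> bool" where
  "wf_marking N m \<longleftrightarrow> set_mset m \<subseteq> net_places N"

definition ptstep :: "('p, 'u) ptnet \<Rightarrow> 'p multiset \<Rightarrow> 'u \<Rightarrow> 'p multiset \<Rightarrow> bool" where
  "ptstep N m t m' \<longleftrightarrow> t \<in> net_trans N \<and>
     (\<exists>m3. m = net_pre N t + m3 \<and> m' = net_post N t + m3)"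

primrec steps :: "('m \<Rightarrow> 'l \<Rightarrow> 'm \<Rightarrow> bool) \<Rightarrow> 'm \<Rightarrow> 'l list \<Rightarrow> 'm \<Rightarrow> bool" where
  "steps R m [] m' \<longleftrightarrow> m' = m"
| "steps R m (x # s) m' \<longleftrightarrow> (\<exists>m1. R m x m1 \<and> steps R m1 s m')"

text \<open>Colours: variables (indexed by nat), pairs (h, n) with h a (finite) set of colours,
and t(H) for a transition name t and a finite set H of coloured places a(c).\<close>
datatype ('s, 't) colour =
    CVar nat
  | CPair "('s, 't) colour fset" nat
  | CTr 't "('s \<times> ('s, 't) colour) fset"

primrec csubst :: "(nat \<Rightarrow> ('s, 't) colour option) \<Rightarrow> ('s, 't) colour \<Rightarrow> ('s, 't) colour" where
  "csubst \<sigma> (CVar x) = (case \<sigma> x of Some c \<Rightarrow> c | None \<Rightarrow> CVar x)"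
| "csubst \<sigma> (CPair h n) = CPair (fimage (csubst \<sigma>) h) n"
| "csubst \<sigma> (CTr t H) = CTr t (fimage (map_prod id (csubst \<sigma>)) H)"

definition msubst :: "(nat \<Rightarrow> ('s, 't) colour option) \<Rightarrow> ('s \<times> ('s, 't) colour) multiset
    \<Rightarrow> ('s \<times> ('s, 't) colour) multiset" where
  "msubst \<sigma> M = image_mset (map_prod id (csubst \<sigma>)) M"

definition fset_of_mset :: "'a multiset \<Rightarrow> 'a fset" where
  "fset_of_mset M = Abs_fset (set_mset M)"

record ('s, 't) cnet =
  cn_places :: "'s set"
  cn_trans  :: "'t set"
  cn_pre    :: "'t \<Rightarrow> ('s \<times> ('s, 't) colour) multiset"
  cn_post   :: "'t \<Rightarrow> ('s \<times> ('s, 't) colour) multiset"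

text \<open>Coloured firing of t under substitution sigma, labelled (under the identification of
the theorem) by the pair (t, H) where H is the set of consumed tokens (pre t) sigma.\<close>
definition cstep :: "('s, 't) cnet \<Rightarrow> ('s \<times> ('s, 't) colour) multiset
    \<Rightarrow> 't \<times> ('s \<times> ('s, 't) colour) fset \<Rightarrow> ('s \<times> ('s, 't) colour) multiset \<Rightarrow> bool" where
  "cstep CN m x m' \<longleftrightarrow> (case x of (t, H) \<Rightarrow> t \<in> cn_trans CN \<and>
     (\<exists>\<sigma> m3. m = msubst \<sigma> (cn_pre CN t) + m3 \<and> m' = msubst \<sigma> (cn_post CN t) + m3 \<and>
             fset H = set_mset (msubst \<sigma> (cn_pre CN t))))"

text \<open>The preset a1 + ... + an becomes a1(x1) + ... + an(xn) with pairwise distinct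
variables (here the variables 0, ..., n-1 for some enumeration of the preset).\<close>
definition enc_pre :: "('s, 't) ptnet \<Rightarrow> 't \<Rightarrow> ('s \<times> ('s, 't) colour) multiset" where
  "enc_pre N t = (let xs = (SOME xs. mset xs = net_pre N t)
                  in mset (map (\<lambda>i. (xs ! i, CVar i)) [0..<length xs]))"

definition enc_post :: "('s, 't) ptnet \<Rightarrow> 't \<Rightarrow> ('s \<times> ('s, 't) colour) multiset" where
  "enc_post N t = mset_set {(a, CPair {| CTr t (fset_of_mset (enc_pre N t)) |} i) | a i.
                               a \<in># net_post N t \<and> 1 \<le> i \<and> i \<le> count (net_post N t) a}"

definition enc_net :: "('s, 't) ptnet \<Rightarrow> ('s, 't) cnet" where
  "enc_net N = \<lparr> cn_places = net_places N, cn_trans = net_trans N,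
                 cn_pre = enc_pre N, cn_post = enc_post N \<rparr>"

definition enc_marking :: "'s multiset \<Rightarrow> ('s \<times> ('s, 't) colour) multiset" where
  "enc_marking m = mset_set {(a, CPair {||} i) | a i. a \<in># m \<and> 1 \<le> i \<and> i \<le> count m a}"

text \<open>Places of the unfolding are coloured places a(h,i) (pairs of a place and a colour),
transitions are t(H) (pairs of a transition and a finite set of such places).\<close>
type_synonym ('s, 't) uplace = "'s \<times> ('s, 't) colour"
type_synonym ('s, 't) utrans = "'t \<times> ('s \<times> ('s, 't) colour) fset"

datatype ('s, 't) unode = UP "('s, 't) uplace" | UT "('s, 't) utrans"

definition upost :: "('s, 't) ptnet \<Rightarrow> ('s, 't) utrans \<Rightarrow> ('s, 't) uplace set" where
  "upost N x = (case x of (t, H) \<Rightarrow>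
     {(a, CPair {| CTr t H |} i) | a i. a \<in># net_post N t \<and> 1 \<le> i \<and> i \<le> count (net_post N t) a})"

definition uflow :: "('s, 't) ptnet \<Rightarrow> (('s, 't) unode \<times> ('s, 't) unode) set" where
  "uflow N = {(UP p, UT (t, H)) | p t H. p |\<in>| H} \<union>
             {(UT x, UP p) | x p. p \<in> upost N x}"

definition ule :: "('s, 't) ptnet \<Rightarrow> ('s, 't) unode \<Rightarrow> ('s, 't) unode \<Rightarrow> bool" where
  "ule N x y \<longleftrightarrow> (x, y) \<in> (uflow N)\<^sup>*"

definition uconfl :: "('s, 't) ptnet \<Rightarrow> ('s, 't) unode \<Rightarrow> ('s, 't) unode \<Rightarrow> bool" where
  "uconfl N x y \<longleftrightarrow> (\<exists>t1 H1 t2 H2. ule N (UT (t1, H1)) x \<and> ule N (UT (t2, H2)) y \<and>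
       (t1, H1) \<noteq> (t2, H2) \<and> H1 |\<inter>| H2 \<noteq> {||})"

definition uco :: "('s, 't) ptnet \<Rightarrow> ('s, 't) unode \<Rightarrow> ('s, 't) unode \<Rightarrow> bool" where
  "uco N x y \<longleftrightarrow> x \<noteq> y \<and> \<not> ule N x y \<and> \<not> ule N y x \<and> \<not> uconfl N x y"

definition uCO :: "('s, 't) ptnet \<Rightarrow> ('s, 't) uplace fset \<Rightarrow> bool" where
  "uCO N X \<longleftrightarrow> (\<forall>x y. x |\<in>| X \<longrightarrow> y |\<in>| X \<longrightarrow> x \<noteq> y \<longrightarrow> uco N (UP x) (UP y)) \<and>
     finite {u. \<exists>x. x |\<in>| X \<and> ule N (UT u) (UP x)}"

inductive uplaces :: "('s, 't) ptnet \<Rightarrow> 's multiset \<Rightarrow> ('s, 't) uplace \<Rightarrow> bool"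
  and utransitions :: "('s, 't) ptnet \<Rightarrow> 's multiset \<Rightarrow> ('s, 't) utrans \<Rightarrow> bool"
  for N :: "('s, 't) ptnet" and m :: "'s multiset" where
  init: "a \<in># m \<Longrightarrow> 1 \<le> i \<Longrightarrow> i \<le> count m a \<Longrightarrow> uplaces N m (a, CPair {||} i)"
| trans: "t \<in> net_trans N \<Longrightarrow> (\<forall>p. p |\<in>| H \<longrightarrow> uplaces N m p) \<Longrightarrow> uCO N H \<Longrightarrow>
          image_mset fst (mset_set (fset H)) = net_pre N t \<Longrightarrow> utransitions N m (t, H)"
| post: "utransitions N m x \<Longrightarrow> p \<in> upost N x \<Longrightarrow> uplaces N m p"

definition unfold_net :: "('s, 't) ptnet \<Rightarrow> 's multiset \<Rightarrow> (('s, 't) uplace, ('s, 't) utrans) ptnet" where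
  "unfold_net N m = \<lparr> net_places = {p. uplaces N m p}, net_trans = {x. utransitions N m x},
       net_pre = (\<lambda>x. mset_set (fset (snd x))), net_post = (\<lambda>x. mset_set (upost N x)) \<rparr>"

definition unfold_marking :: "'s multiset \<Rightarrow> ('s, 't) uplace multiset" where
  "unfold_marking m = mset_set {(a, CPair {||} i) | a i. a \<in># m \<and> 1 \<le> i \<and> i \<le> count m a}"

end

theory Submission
  imports Defs "HOL-Library.Disjoint_Sets" "HOL-Combinatorics.Permutations"
begin

text \<open>Every marking reachable in the unfolding is a set of places, namely the cut of a
configuration \<open>C\<close> (a finite, causally closed, conflict-free set of events): the initial places
and the places produced by \<open>C\<close>, minus those consumed by \<open>C\<close>. On a marking that is a set the two
firing rules agree: a coloured firing of \<open>t\<close> under \<open>\<sigma>\<close> consumes exactly the set \<open>H\<close> of tokens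
\<open>(pre t)\<sigma>\<close> and produces the postset of \<open>t(H)\<close>; conversely every \<open>H\<close> carrying the preset of
\<open>t\<close> is reached by some \<open>\<sigma>\<close>; and a set \<open>H\<close> inside a cut is a co-set, so \<open>t(H)\<close> is an event
of the unfolding. Firing \<open>t(H)\<close> from the cut of \<open>C\<close> leads to the cut of the configuration
\<open>C \<union> {t(H)}\<close>, and induction on the firing sequence concludes.\<close>

lemma mset_set_eq_add_mset_set_iff:
  assumes "finite K" "finite A"
  shows "mset_set K = mset_set A + R \<longleftrightarrow> A \<subseteq> K \<and> R = mset_set (K - A)"
proof
  assume K: "mset_set K = mset_set A + R"
  then have "A \<subseteq> K"
    using assms by (metis elem_mset_set mset_subset_eq_add_left mset_subset_eqD subsetI)
  with K show "A \<subseteq> K \<and> R = mset_set (K - A)"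
    using assms by (simp add: mset_set_Diff)
next
  assume "A \<subseteq> K \<and> R = mset_set (K - A)"
  then have "K = A \<union> (K - A)" "R = mset_set (K - A)"
    by auto
  then show "mset_set K = mset_set A + R"
    using assms by (metis Diff_disjoint finite_Diff mset_set_Union)
qed

lemma subset_mset_mset_set_eq:
  assumes "finite K" "E \<subseteq># mset_set K"
  shows "E = mset_set (set_mset E)"
proof (rule multiset_eqI)
  fix x
  have "count E x \<le> count (mset_set K) x"
    using assms(2) by (rule mset_subset_eq_count)
  also have "\<dots> \<le> 1"
    by (simp add: count_mset_set')
  finally have "count E x \<le> 1" .
  then show "count E x = count (mset_set (set_mset E)) x"
    by (cases "count E x") (simp_all add: count_inI not_in_iff)
qed

text \<open>The places \<open>a(h, i)\<close>, \<open>1 \<le> i \<le> M(a)\<close>: with \<open>h = {}\<close> the initial places, with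
\<open>h = {t(H)}\<close> the postset of \<open>t(H)\<close>.\<close>

definition tokens :: "'s multiset \<Rightarrow> ('s, 't) colour fset \<Rightarrow> ('s, 't) uplace set" where
  "tokens M h = (\<lambda>(a, i). (a, CPair h i)) ` (SIGMA a:set_mset M. {1..count M a})"

lemma tokens_eq: "tokens M h = {(a, CPair h i) | a i. a \<in># M \<and> 1 \<le> i \<and> i \<le> count M a}"
  unfolding tokens_def by force

lemma finite_tokens: "finite (tokens M h)"
  unfolding tokens_def by simp

lemma tokens_disjoint: "h \<noteq> h' \<Longrightarrow> tokens M h \<inter> tokens M' h' = {}"
  unfolding tokens_def by auto

lemma msubst_tokens:
  fixes M :: "'s multiset" and h :: "('s, 't) colour fset"
  shows "msubst \<sigma> (mset_set (tokens M h)) = mset_set (tokens M (fimage (csubst \<sigma>) h))"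
proof -
  define tok where "tok h = (\<lambda>(a :: 's, i :: nat). (a, CPair h i))" for h :: "('s, 't) colour fset"
  define Q where "Q = (SIGMA a:set_mset M. {1..count M a})"
  have mset_set_tok: "mset_set (tok h ` Q) = image_mset (tok h) (mset_set Q)" for h
    by (rule image_mset_mset_set[symmetric]) (auto simp: tok_def intro: inj_onI)
  have "map_prod id (csubst \<sigma>) \<circ> tok h = tok (fimage (csubst \<sigma>) h)"
    by (auto simp: tok_def)
  then show ?thesis
    unfolding msubst_def tokens_def tok_def[symmetric] Q_def[symmetric] mset_set_tok
    by (simp add: image_mset.compositionality)
qed

lemma upost_eq_tokens: "upost N (t, H) = tokens (net_post N t) {|CTr t H|}"
  unfolding upost_def tokens_eq by simp

lemma upost_disjoint_initial: "upost N x \<inter> tokens m {||} = {}"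
  by (cases x) (simp add: upost_eq_tokens tokens_disjoint)

lemma upost_disjoint: "x \<noteq> y \<Longrightarrow> upost N x \<inter> upost N y = {}"
  by (cases x; cases y) (simp add: upost_eq_tokens tokens_disjoint)

lemma finite_upost: "finite (upost N x)"
  by (cases x) (simp add: upost_eq_tokens finite_tokens)

lemma enc_post_eq_tokens:
  "enc_post N t = mset_set (tokens (net_post N t) {|CTr t (fset_of_mset (enc_pre N t))|})"
  unfolding enc_post_def tokens_eq ..

lemma enc_marking_eq_tokens: "enc_marking m = mset_set (tokens m {||})"
  unfolding enc_marking_def tokens_eq ..

lemma unfold_marking_eq_tokens: "unfold_marking m = mset_set (tokens m {||})"
  unfolding unfold_marking_def tokens_eq ..

definition pre_list :: "('s, 't) ptnet \<Rightarrow> 't \<Rightarrow> 's list" where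
  "pre_list N t = (SOME xs. mset xs = net_pre N t)"

lemma mset_pre_list: "mset (pre_list N t) = net_pre N t"
  unfolding pre_list_def by (rule someI_ex) (rule ex_mset)

lemma enc_pre_eq_zip:
  "enc_pre N t = mset (zip (pre_list N t) (map CVar [0..<length (pre_list N t)]))"
proof -
  have map_nth_zip: "map (\<lambda>i. (xs ! i, CVar i)) [0..<length xs] = zip xs (map CVar [0..<length xs])"
    for xs :: "'s list"
    by (rule nth_equalityI) simp_all
  show ?thesis
    unfolding enc_pre_def Let_def pre_list_def[symmetric] by (simp only: map_nth_zip)
qed

lemma msubst_mset_zip:
  "msubst \<sigma> (mset (zip xs cs)) = mset (zip xs (map (csubst \<sigma>) cs))"
  by (simp add: msubst_def zip_map2 map_prod_def flip: mset_map)

lemma image_mset_fst_msubst_enc_pre: "image_mset fst (msubst \<sigma> (enc_pre N t)) = net_pre N t"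
  by (simp add: enc_pre_eq_zip msubst_mset_zip mset_pre_list flip: mset_map)

lemma msubst_enc_pre_onto:
  assumes "image_mset fst E = net_pre N t"
  obtains \<sigma> where "msubst \<sigma> (enc_pre N t) = E"
proof -
  obtain hs0 where hs0: "mset hs0 = E" using ex_mset by blast
  have "mset (pre_list N t) = mset (map fst hs0)"
    using assms by (simp add: mset_pre_list flip: hs0)
  then obtain p where p: "p permutes {..<length hs0}" "permute_list p (map fst hs0) = pre_list N t"
    by (rule mset_eq_permutation) simp
  define hs where "hs = permute_list p hs0"
  have hs: "mset hs = E" "map fst hs = pre_list N t"
    using p by (simp_all add: hs_def hs0 mset_permute_list permute_list_map)
  define \<sigma> where "\<sigma> i = Some (snd (hs ! i))" for i
  have "map (csubst \<sigma>) (map CVar [0..<length hs]) = map snd hs"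
    by (rule nth_equalityI) (simp_all add: \<sigma>_def)
  then have "msubst \<sigma> (enc_pre N t) = mset (zip (map fst hs) (map snd hs))"
    by (simp add: enc_pre_eq_zip msubst_mset_zip flip: hs(2))
  then show ?thesis using that hs(1) by (simp add: zip_map_fst_snd)
qed

lemma fimage_msubst_fset_of_mset:
  assumes "fset H = set_mset (msubst \<sigma> E)"
  shows "fimage (map_prod id (csubst \<sigma>)) (fset_of_mset E) = H"
proof -
  have "fset (fset_of_mset E) = set_mset E"
    unfolding fset_of_mset_def by (rule Abs_fset_inverse) simp
  then show ?thesis
    using assms by (simp add: msubst_def fimage.rep_eq fset_inject flip: fset_inject)
qed

lemma msubst_enc_post:
  assumes "fset H = set_mset (msubst \<sigma> (enc_pre N t))"
  shows "msubst \<sigma> (enc_post N t) = mset_set (upost N (t, H))"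
  using fimage_msubst_fset_of_mset[OF assms]
  by (simp add: enc_post_eq_tokens msubst_tokens upost_eq_tokens)

lemma cstep_enc_net_mset_set_iff:
  assumes K: "finite K"
  shows "cstep (enc_net N) (mset_set K) (t, H) M' \<longleftrightarrow>
    t \<in> net_trans N \<and> image_mset fst (mset_set (fset H)) = net_pre N t \<and> fset H \<subseteq> K \<and>
    M' = mset_set (upost N (t, H)) + mset_set (K - fset H)"
    (is "_ \<longleftrightarrow> ?rhs")
proof
  assume "cstep (enc_net N) (mset_set K) (t, H) M'"
  then obtain \<sigma> m3 where t: "t \<in> net_trans N"
    and KE: "mset_set K = msubst \<sigma> (enc_pre N t) + m3"
    and M': "M' = msubst \<sigma> (enc_post N t) + m3"
    and H: "fset H = set_mset (msubst \<sigma> (enc_pre N t))"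
    unfolding cstep_def enc_net_def by auto
  \<comment> \<open>Below a marking that is a set, the consumed multiset is a set too, hence determined by \<open>H\<close>.\<close>
  have E: "msubst \<sigma> (enc_pre N t) = mset_set (fset H)"
    unfolding H using K by (rule subset_mset_mset_set_eq) (simp add: KE)
  with KE have "fset H \<subseteq> K" "m3 = mset_set (K - fset H)"
    using mset_set_eq_add_mset_set_iff[OF K] by simp_all
  moreover have "image_mset fst (mset_set (fset H)) = net_pre N t"
    using image_mset_fst_msubst_enc_pre[of \<sigma> N t] by (simp only: E)
  ultimately show ?rhs
    using t unfolding M' msubst_enc_post[OF H] by blast
next
  assume rhs: ?rhs
  then have "image_mset fst (mset_set (fset H)) = net_pre N t"
    by simp
  then obtain \<sigma> where \<sigma>: "msubst \<sigma> (enc_pre N t) = mset_set (fset H)"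
    by (rule msubst_enc_pre_onto)
  then have H: "fset H = set_mset (msubst \<sigma> (enc_pre N t))"
    by simp
  have "mset_set K = msubst \<sigma> (enc_pre N t) + mset_set (K - fset H)"
    using rhs mset_set_eq_add_mset_set_iff[OF K] by (simp add: \<sigma>)
  moreover have "M' = msubst \<sigma> (enc_post N t) + mset_set (K - fset H)"
    using rhs by (simp add: msubst_enc_post[OF H])
  ultimately show "cstep (enc_net N) (mset_set K) (t, H) M'"
    unfolding cstep_def enc_net_def using rhs H by auto
qed

lemma ptstep_unfold_net_mset_set_iff:
  assumes "finite K"
  shows "ptstep (unfold_net N m) (mset_set K) (t, H) M' \<longleftrightarrow>
    utransitions N m (t, H) \<and> fset H \<subseteq> K \<and> M' = mset_set (upost N (t, H)) + mset_set (K - fset H)"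
  unfolding ptstep_def unfold_net_def using mset_set_eq_add_mset_set_iff[OF assms] by (simp add: mem_Collect_eq)

lemma utransitions_iff:
  "utransitions N m (t, H) \<longleftrightarrow> t \<in> net_trans N \<and> (\<forall>p. p |\<in>| H \<longrightarrow> uplaces N m p) \<and> uCO N H \<and>
     image_mset fst (mset_set (fset H)) = net_pre N t"
  by (subst utransitions.simps) auto

definition produced :: "('s, 't) ptnet \<Rightarrow> 's multiset \<Rightarrow> ('s, 't) utrans set \<Rightarrow> ('s, 't) uplace set" where
  "produced N m C = tokens m {||} \<union> (\<Union>x\<in>C. upost N x)"

definition consumed :: "('s, 't) utrans set \<Rightarrow> ('s, 't) uplace set" where
  "consumed C = (\<Union>x\<in>C. fset (snd x))"

definition marking_of :: "('s, 't) ptnet \<Rightarrow> 's multiset \<Rightarrow> ('s, 't) utrans set \<Rightarrow> ('s, 't) uplace set" where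
  "marking_of N m C = produced N m C - consumed C"

text \<open>Causal closure is the inclusion \<open>consumed C \<subseteq> produced N m C\<close>; conflict-freeness is the
disjointness of the presets.\<close>

definition configuration :: "('s, 't) ptnet \<Rightarrow> 's multiset \<Rightarrow> ('s, 't) utrans set \<Rightarrow> bool" where
  "configuration N m C \<longleftrightarrow> finite C \<and> C \<subseteq> {x. utransitions N m x} \<and>
     consumed C \<subseteq> produced N m C \<and> disjoint_family_on (\<lambda>x. fset (snd x)) C"

lemma finite_marking_of: "finite C \<Longrightarrow> finite (marking_of N m C)"
  unfolding marking_of_def produced_def by (simp add: finite_tokens finite_upost)

lemma configuration_empty: "configuration N m {}"
  unfolding configuration_def consumed_def disjoint_family_on_def by simp

lemma marking_of_empty: "marking_of N m {} = tokens m {||}"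
  unfolding marking_of_def produced_def consumed_def by simp

lemma produced_subset_uplaces:
  assumes "C \<subseteq> {x. utransitions N m x}"
  shows "produced N m C \<subseteq> {p. uplaces N m p}"
  unfolding produced_def tokens_eq
  using assms by (auto intro: uplaces_utransitions.init uplaces_utransitions.post)

lemma configuration_causally_closed:
  assumes conf: "configuration N m C" and y: "y \<in> produced N m C" and le: "ule N (UT w) (UP y)"
  shows "w \<in> C"
proof -
  have cl: "consumed C \<subseteq> produced N m C"
    using conf unfolding configuration_def by blast
  have "(\<forall>w. n = UT w \<longrightarrow> w \<in> C) \<and> (\<forall>q. n = UP q \<longrightarrow> q \<in> produced N m C)"
    if "(n, UP y) \<in> (uflow N)\<^sup>*" for n
    using that
  proof (induction rule: converse_rtrancl_induct)
    case base
    then show ?case using y by simp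
  next
    case (step a b)
    from step.hyps(1) consider
        (pre) p t H where "a = UP p" "b = UT (t, H)" "p |\<in>| H"
      | (post) x p where "a = UT x" "b = UP p" "p \<in> upost N x"
      unfolding uflow_def by blast
    then show ?case
    proof cases
      case pre
      with step.IH have "(t, H) \<in> C" by simp
      with pre cl show ?thesis unfolding consumed_def by force
    next
      case post
      with step.IH have "p \<in> produced N m C" by simp
      then obtain c where "c \<in> C" "p \<in> upost N c"
        using post(3) upost_disjoint_initial[of N x m] unfolding produced_def by blast
      with post show ?thesis using upost_disjoint[of x c N] by auto
    qed
  qed
  with le show ?thesis unfolding ule_def by blast
qed

lemma configuration_marking_of_maximal:
  assumes conf: "configuration N m C" and x: "x \<in> marking_of N m C" and y: "y \<in> produced N m C"
    and le: "ule N (UP x) (UP y)"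
  shows "x = y"
proof (rule ccontr)
  assume "x \<noteq> y"
  with le obtain z where "(UP x, z) \<in> uflow N" "(z, UP y) \<in> (uflow N)\<^sup>*"
    unfolding ule_def by (auto elim: converse_rtranclE)
  then obtain t H where "x |\<in>| H" "ule N (UT (t, H)) (UP y)"
    unfolding uflow_def ule_def by auto
  with conf y have "x \<in> consumed C"
    unfolding consumed_def by (force dest: configuration_causally_closed)
  with x show False
    unfolding marking_of_def by blast
qed

lemma configuration_uCO:
  assumes conf: "configuration N m C" and H: "fset H \<subseteq> marking_of N m C"
  shows "uCO N H"
proof -
  have produced: "x |\<in>| H \<Longrightarrow> x \<in> produced N m C" for x
    using H unfolding marking_of_def by blast
  have below: "u \<in> C" if "x |\<in>| H" "ule N (UT u) (UP x)" for u x
    using configuration_causally_closed[OF conf produced] that by blast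
  have disj: "disjoint_family_on (\<lambda>x. fset (snd x)) C"
    using conf unfolding configuration_def by blast
  have "\<not> uconfl N (UP x) (UP y)" if xy: "x |\<in>| H" "y |\<in>| H" for x y
  proof
    assume "uconfl N (UP x) (UP y)"
    then obtain t1 H1 t2 H2 where "(t1, H1) \<in> C" "(t2, H2) \<in> C" "(t1, H1) \<noteq> (t2, H2)"
        "H1 |\<inter>| H2 \<noteq> {||}"
      unfolding uconfl_def using below xy by blast
    with disj show False
      unfolding disjoint_family_on_def by (metis fset_inject inter_fset bot_fset.rep_eq snd_conv)
  qed
  moreover have "\<not> ule N (UP x) (UP y)" if "x |\<in>| H" "y |\<in>| H" "x \<noteq> y" for x y
    using configuration_marking_of_maximal[OF conf _ produced] H that by blast
  moreover have "finite {u. \<exists>x. x |\<in>| H \<and> ule N (UT u) (UP x)}"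
    using conf below unfolding configuration_def by (blast intro: finite_subset)
  ultimately show ?thesis
    unfolding uCO_def uco_def by blast
qed

lemma upost_disjoint_produced:
  assumes "x \<notin> C"
  shows "upost N x \<inter> produced N m C = {}"
proof -
  have "upost N x \<inter> upost N c = {}" if "c \<in> C" for c
    using assms that by (metis upost_disjoint)
  then show ?thesis
    unfolding produced_def using upost_disjoint_initial by blast
qed

lemma marking_of_insert:
  assumes conf: "configuration N m C" and x: "x \<notin> C" and pre: "fset (snd x) \<subseteq> marking_of N m C"
  shows "marking_of N m (insert x C) = upost N x \<union> (marking_of N m C - fset (snd x))"
proof -
  have "consumed C \<union> fset (snd x) \<subseteq> produced N m C"
    using conf pre unfolding configuration_def marking_of_def by blast
  then have "upost N x \<inter> (consumed C \<union> fset (snd x)) = {}"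
    using upost_disjoint_produced[OF x] by blast
  then show ?thesis
    unfolding marking_of_def produced_def consumed_def by auto
qed

lemma configuration_insert:
  assumes conf: "configuration N m C" and x: "utransitions N m x" "x \<notin> C"
    and pre: "fset (snd x) \<subseteq> marking_of N m C"
  shows "configuration N m (insert x C)"
proof -
  have "fset (snd x) \<inter> consumed C = {}"
    using pre unfolding marking_of_def by blast
  then show ?thesis
    using conf x pre
    unfolding configuration_def marking_of_def disjoint_family_on_insert[OF x(2)]
    by (auto simp: consumed_def produced_def)
qed

lemma cstep_iff_ptstep_marking_of:
  assumes conf: "configuration N m C"
  shows "cstep (enc_net N) (mset_set (marking_of N m C)) x M' \<longleftrightarrow>
    ptstep (unfold_net N m) (mset_set (marking_of N m C)) x M'"
proof -
  obtain t H where x: "x = (t, H)"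
    by fastforce
  have fin: "finite (marking_of N m C)"
    using conf finite_marking_of unfolding configuration_def by blast
  have "uCO N H \<and> (\<forall>p. p |\<in>| H \<longrightarrow> uplaces N m p)" if "fset H \<subseteq> marking_of N m C"
    using configuration_uCO[OF conf that] produced_subset_uplaces[of C N m] conf that
    unfolding configuration_def marking_of_def by blast
  then show ?thesis
    unfolding x cstep_enc_net_mset_set_iff[OF fin] ptstep_unfold_net_mset_set_iff[OF fin] utransitions_iff
    by blast
qed

lemma ptstep_marking_of_next:
  assumes wf: "wf_ptnet N" and conf: "configuration N m C"
    and step: "ptstep (unfold_net N m) (mset_set (marking_of N m C)) x M'"
  shows "configuration N m (insert x C) \<and> M' = mset_set (marking_of N m (insert x C))"
proof -
  obtain t H where x: "x = (t, H)"
    by fastforce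
  have fin: "finite (marking_of N m C)"
    using conf finite_marking_of unfolding configuration_def by blast
  from step have ut: "utransitions N m (t, H)" and H: "fset H \<subseteq> marking_of N m C"
    and M': "M' = mset_set (upost N (t, H)) + mset_set (marking_of N m C - fset H)"
    unfolding x ptstep_unfold_net_mset_set_iff[OF fin] by blast+
  \<comment> \<open>Presets are nonempty, so \<open>t(H)\<close> consumes a place of the cut of \<open>C\<close> and has not fired in \<open>C\<close>.\<close>
  have "net_pre N t \<noteq> {#}"
    using wf ut unfolding wf_ptnet_def utransitions_iff by blast
  then have "fset H \<noteq> {}"
    using ut unfolding utransitions_iff by auto
  with H have fresh: "(t, H) \<notin> C"
    unfolding marking_of_def consumed_def by force
  have "upost N (t, H) \<inter> (marking_of N m C - fset H) = {}"
    using upost_disjoint_produced[OF fresh] unfolding marking_of_def by blast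
  then have "M' = mset_set (upost N (t, H) \<union> (marking_of N m C - fset H))"
    unfolding M' using fin by (simp add: mset_set_Union finite_upost)
  then show ?thesis
    unfolding x using configuration_insert[OF conf ut fresh] H marking_of_insert[OF conf fresh] by simp
qed

lemma steps_enc_net_iff_steps_unfold_net:
  assumes wf: "wf_ptnet N" and conf: "configuration N m C"
  shows "steps (cstep (enc_net N)) (mset_set (marking_of N m C)) s M'' \<longleftrightarrow>
    steps (ptstep (unfold_net N m)) (mset_set (marking_of N m C)) s M''"
  using conf
proof (induction s arbitrary: C)
  case Nil
  then show ?case by simp
next
  case (Cons x s)
  let ?K = "mset_set (marking_of N m C)"
  have "steps (cstep (enc_net N)) M1 s M'' \<longleftrightarrow> steps (ptstep (unfold_net N m)) M1 s M''"
    if "ptstep (unfold_net N m) ?K x M1" for M1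
    using ptstep_marking_of_next[OF wf Cons.prems that] Cons.IH by blast
  then show ?case
    using cstep_iff_ptstep_marking_of[OF Cons.prems] by (simp del: steps.simps(1)) blast
qed

theorem mainTheorem14:
  fixes N :: "('s, 't) ptnet" and m :: "'s multiset"
  assumes "wf_ptnet N" and "wf_marking N m"
  shows "\<forall>(s :: ('s, 't) utrans list) (m'' :: ('s, 't) uplace multiset).
           steps (cstep (enc_net N)) (enc_marking m) s m''
           \<longleftrightarrow> steps (ptstep (unfold_net N m)) (unfold_marking m) s m''"
proof (intro allI)
  fix s :: "('s, 't) utrans list" and m'' :: "('s, 't) uplace multiset"
  have "enc_marking m = mset_set (marking_of N m {})" "unfold_marking m = mset_set (marking_of N m {})"
    by (simp_all only: enc_marking_eq_tokens unfold_marking_eq_tokens marking_of_empty)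
  then show "steps (cstep (enc_net N)) (enc_marking m) s m'' \<longleftrightarrow>
      steps (ptstep (unfold_net N m)) (unfold_marking m) s m''"
    using steps_enc_net_iff_steps_unfold_net[OF assms(1) configuration_empty] by simp
qed

end
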